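(* There exists a (continuous) homogeneous quadratic polynomial $P:\ell_1(\mathfrak{c})\to\mathbb{C}$, where $\mathfrak c$ is the cardinality of the continuum, which has a separable maximal zero subspace and also a maximal zero subspace of density $\mathfrak{c}$.
   Context: Banach spaces are complex. A zero subspace of $P$ is a linear subspace on which $P$ vanishes identically; it is maximal if not properly contained in another zero subspace. Density of a space means the least cardinality of a dense subset. *)

theory Defs
  imports "HOL-Analysis.Analysis" "HOL-Library.Equipollence"
begin

text \<open>The complex Banach space ell_1(c): index set = the reals (cardinality continuum),
  elements are functions real => complex with absolutely summable values.\<close>

definition l1 :: "(real \<Rightarrow> complex) set" where
  "l1 = {x. (\<lambda>i. norm (x i)) summable_on UNIV}"

definition l1norm :: "(real \<Rightarrow> complex) \<Rightarrow> real" where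
  "l1norm x = infsum (\<lambda>i. norm (x i)) UNIV"

definition l1_subspace :: "(real \<Rightarrow> complex) set \<Rightarrow> bool" where
  "l1_subspace V \<longleftrightarrow> V \<subseteq> l1 \<and> (\<lambda>i. 0) \<in> V \<and>
     (\<forall>x\<in>V. \<forall>y\<in>V. (\<lambda>i. x i + y i) \<in> V) \<and> (\<forall>c::complex. \<forall>x\<in>V. (\<lambda>i. c * x i) \<in> V)"

definition bounded_bilinear_l1 :: "((real \<Rightarrow> complex) \<Rightarrow> (real \<Rightarrow> complex) \<Rightarrow> complex) \<Rightarrow> bool" where
  "bounded_bilinear_l1 B \<longleftrightarrow>
     (\<forall>x\<in>l1. \<forall>y\<in>l1. \<forall>z\<in>l1. B (\<lambda>i. x i + y i) z = B x z + B y z \<and> B x (\<lambda>i. y i + z i) = B x y + B x z) \<and>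
     (\<forall>c::complex. \<forall>x\<in>l1. \<forall>y\<in>l1. B (\<lambda>i. c * x i) y = c * B x y \<and> B x (\<lambda>i. c * y i) = c * B x y) \<and>
     (\<exists>C. \<forall>x\<in>l1. \<forall>y\<in>l1. norm (B x y) \<le> C * l1norm x * l1norm y)"

text \<open>Continuous 2-homogeneous polynomial on ell_1 (values outside ell_1 irrelevant).\<close>
definition cont_quadratic_poly_l1 :: "((real \<Rightarrow> complex) \<Rightarrow> complex) \<Rightarrow> bool" where
  "cont_quadratic_poly_l1 P \<longleftrightarrow> (\<exists>B. bounded_bilinear_l1 B \<and> (\<forall>x\<in>l1. P x = B x x))"

definition zero_subspace :: "((real \<Rightarrow> complex) \<Rightarrow> complex) \<Rightarrow> (real \<Rightarrow> complex) set \<Rightarrow> bool" where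
  "zero_subspace P V \<longleftrightarrow> l1_subspace V \<and> (\<forall>x\<in>V. P x = 0)"

definition maximal_zero_subspace :: "((real \<Rightarrow> complex) \<Rightarrow> complex) \<Rightarrow> (real \<Rightarrow> complex) set \<Rightarrow> bool" where
  "maximal_zero_subspace P V \<longleftrightarrow> zero_subspace P V \<and>
     (\<forall>W. zero_subspace P W \<and> V \<subseteq> W \<longrightarrow> W = V)"

definition l1_dense_in :: "(real \<Rightarrow> complex) set \<Rightarrow> (real \<Rightarrow> complex) set \<Rightarrow> bool" where
  "l1_dense_in D V \<longleftrightarrow> D \<subseteq> V \<and> (\<forall>x\<in>V. \<forall>e>0. \<exists>d\<in>D. l1norm (\<lambda>i. x i - d i) < e)"

definition l1_separable :: "(real \<Rightarrow> complex) set \<Rightarrow> bool" where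
  "l1_separable V \<longleftrightarrow> (\<exists>D. countable D \<and> l1_dense_in D V)"

definition l1_density_continuum :: "(real \<Rightarrow> complex) set \<Rightarrow> bool" where
  "l1_density_continuum V \<longleftrightarrow>
     (\<exists>D. l1_dense_in D V \<and> D \<approx> (UNIV :: real set)) \<and>
     (\<forall>D. l1_dense_in D V \<longrightarrow> (UNIV :: real set) \<lesssim> D)"

end

theory Submission
  imports Defs
begin

text \<open>Split the index set \<real> into the naturals, their partners -n-1, and the rest R, and enumerate
  the rational intervals as I_k. With blocks S_n = {-n-1} \<union> (R \<inter> I_k), where k is the first
  component of n under the pairing of \<nat>, the form P x = \<Sum>_n x_n \<Sum>_{t \<in> S_n} x_t is a bounded quadratic
  form on ell_1. It vanishes on the vectors supported on \<nat> (a separable space) and on the vectors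
  vanishing on \<nat> (which contain the continuum of unit vectors e_t, t < 0, at mutual distance 2).
  Both are maximal by polarisation: testing a vector y of a larger zero subspace against e_{-m-1}
  gives y_m = 0; testing it against e_m gives \<Sum>_{S_m} y = 0, so y_{-n-1} = -\<Sum>_{R \<inter> I_k} y for the
  infinitely many n over a fixed k. Since y_{-n-1} \<rightarrow> 0, every interval sum over R vanishes, which
  forces y = 0 on R and then on the partners.\<close>

section \<open>Cardinality of lists\<close>

lemma infinite_UNIV_square_eqpoll:
  "infinite (UNIV :: 'a set) \<Longrightarrow> (UNIV :: ('a \<times> 'a) set) \<approx> (UNIV :: 'a set)"
  using card_of_Times_same_infinite[of "UNIV :: 'a set"] by (simp add: eqpoll_iff_card_of_ordIso)

fun decode_list :: "('a \<Rightarrow> 'a \<times> 'a) \<Rightarrow> nat \<Rightarrow> 'a \<Rightarrow> 'a list" where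
  "decode_list \<sigma> 0 r = []"
| "decode_list \<sigma> (Suc n) r = fst (\<sigma> r) # decode_list \<sigma> n (snd (\<sigma> r))"

lemma decode_list_surj:
  assumes "surj \<sigma>"
  shows "\<exists>r. decode_list \<sigma> (length l) r = l"
proof (induction l)
  case Nil
  then show ?case by simp
next
  case (Cons a l)
  then obtain r where "decode_list \<sigma> (length l) r = l" by blast
  moreover obtain u where "\<sigma> u = (a, r)" using assms by (metis surjD)
  ultimately show ?case by (intro exI[of _ u]) simp
qed

text \<open>A list is coded by a pair (length, rest), and the rest recursively by pairs (head, tail).\<close>
lemma lists_UNIV_lepoll_infinite:
  assumes "infinite (UNIV :: 'a set)"
  shows "(UNIV :: 'a list set) \<lesssim> (UNIV :: 'a set)"
proof -
  obtain \<sigma> :: "'a \<Rightarrow> 'a \<times> 'a" where \<sigma>: "bij \<sigma>"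
    using eqpoll_sym[OF infinite_UNIV_square_eqpoll[OF assms]] unfolding eqpoll_def by blast
  obtain \<iota> :: "nat \<Rightarrow> 'a" where \<iota>: "inj \<iota>"
    using assms unfolding infinite_le_lepoll lepoll_def by blast
  have "UNIV \<subseteq> range (\<lambda>r. decode_list \<sigma> (inv \<iota> (fst (\<sigma> r))) (snd (\<sigma> r)))"
  proof
    fix l :: "'a list"
    obtain r where r: "decode_list \<sigma> (length l) r = l"
      using decode_list_surj[OF bij_is_surj[OF \<sigma>]] by blast
    have "(\<iota> (length l), r) \<in> range \<sigma>"
      using bij_is_surj[OF \<sigma>] by simp
    then obtain u where u: "(\<iota> (length l), r) = \<sigma> u" by blast
    from r \<iota> u[symmetric] show "l \<in> range (\<lambda>r. decode_list \<sigma> (inv \<iota> (fst (\<sigma> r))) (snd (\<sigma> r)))"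
      by (intro image_eqI[of _ _ u]) simp_all
  qed
  then show ?thesis by (rule subset_image_lepoll)
qed

lemma real_complex_eqpoll_real: "(UNIV :: (real \<times> complex) set) \<approx> (UNIV :: real set)"
proof -
  have inf: "infinite (UNIV :: real set)" by (rule infinite_UNIV_char_0)
  have "bij (\<lambda>z. (Re z, Im z))"
  proof (rule bijI)
    show "inj (\<lambda>z. (Re z, Im z))" by (auto simp: inj_def complex_eq_iff)
    show "surj (\<lambda>z. (Re z, Im z))" by (rule surjI[of _ "\<lambda>p. Complex (fst p) (snd p)"]) simp
  qed
  then have "(UNIV :: complex set) \<approx> (UNIV :: (real \<times> real) set)"
    unfolding eqpoll_def by blast
  then have "(UNIV :: real set) \<times> (UNIV :: complex set) \<approx> (UNIV :: real set) \<times> (UNIV :: (real \<times> real) set)"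
    by (rule times_eqpoll_cong[OF eqpoll_refl])
  also have "\<dots> \<approx> (UNIV :: real set) \<times> (UNIV :: real set)"
    using infinite_UNIV_square_eqpoll[OF inf] by (intro times_eqpoll_cong) simp_all
  also have "\<dots> \<approx> (UNIV :: real set)"
    using infinite_UNIV_square_eqpoll[OF inf] by simp
  finally show ?thesis by simp
qed

section \<open>The space ell_1\<close>

lemma l1_norm_summable_on: "x \<in> l1 \<Longrightarrow> (\<lambda>i. norm (x i)) summable_on A"
  unfolding l1_def by (auto intro: summable_on_subset_banach)

lemma l1_summable_on: "x \<in> l1 \<Longrightarrow> x summable_on A"
  by (rule abs_summable_summable) (rule l1_norm_summable_on)

lemma l1_add: "x \<in> l1 \<Longrightarrow> y \<in> l1 \<Longrightarrow> (\<lambda>i. x i + y i) \<in> l1"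
  unfolding l1_def mem_Collect_eq
  by (rule summable_on_comparison_test[where f="\<lambda>i. norm (x i) + norm (y i)"])
     (auto intro: summable_on_add norm_triangle_ineq)

lemma l1_diff: "x \<in> l1 \<Longrightarrow> y \<in> l1 \<Longrightarrow> (\<lambda>i. x i - y i) \<in> l1"
  unfolding l1_def mem_Collect_eq
  by (rule summable_on_comparison_test[where f="\<lambda>i. norm (x i) + norm (y i)"])
     (auto intro: summable_on_add norm_triangle_ineq4)

lemma l1_cmult: "x \<in> l1 \<Longrightarrow> (\<lambda>i. c * x i) \<in> l1"
  unfolding l1_def by (simp add: norm_mult summable_on_cmult_right)

lemma l1_zero: "(\<lambda>i. 0) \<in> l1"
  unfolding l1_def by simp

lemma l1_finite_support: "finite {i. x i \<noteq> 0} \<Longrightarrow> x \<in> l1"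
  unfolding l1_def mem_Collect_eq by (rule finite_nonzero_values_imp_summable_on) simp

lemma l1_reindex:
  assumes "x \<in> l1" "inj g"
  shows "(\<lambda>n. norm (x (g n))) summable_on UNIV"
    and "(\<Sum>\<^sub>\<infinity>n. norm (x (g n))) \<le> l1norm x"
proof -
  have "(\<lambda>i. norm (x i)) summable_on range g" by (rule l1_norm_summable_on[OF assms(1)])
  then show "(\<lambda>n. norm (x (g n))) summable_on UNIV"
    using summable_on_reindex[OF assms(2), of "\<lambda>i. norm (x i)"] by (simp add: o_def)
  have "(\<Sum>\<^sub>\<infinity>n. norm (x (g n))) = (\<Sum>\<^sub>\<infinity>i\<in>range g. norm (x i))"
    using infsum_reindex[OF assms(2), of "\<lambda>i. norm (x i)"] by (simp add: o_def)
  also have "\<dots> \<le> l1norm x"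
    unfolding l1norm_def by (rule infsum_mono_neutral) (auto intro: l1_norm_summable_on assms(1))
  finally show "(\<Sum>\<^sub>\<infinity>n. norm (x (g n))) \<le> l1norm x" .
qed

lemma l1_reindex_tendsto_zero:
  assumes "x \<in> l1" "inj g"
  shows "(\<lambda>n. x (g n)) \<longlonglongrightarrow> 0"
proof -
  have "summable (\<lambda>n. norm (x (g n)))"
    by (rule summable_on_imp_summable) (rule l1_reindex(1)[OF assms])
  then show ?thesis by (rule tendsto_norm_zero_cancel[OF summable_LIMSEQ_zero])
qed

lemma l1_infsum_split:
  assumes "x \<in> l1"
  shows "(\<Sum>\<^sub>\<infinity>i. norm (x i)) = (\<Sum>\<^sub>\<infinity>i\<in>F. norm (x i)) + (\<Sum>\<^sub>\<infinity>i\<in>-F. norm (x i))"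
  using infsum_Un_disjoint[OF l1_norm_summable_on[OF assms] l1_norm_summable_on[OF assms], of F "-F"]
  by (simp add: Compl_partition)

lemma l1_tail_small:
  assumes "x \<in> l1" "\<epsilon> > 0"
  obtains F where "finite F" "(\<Sum>\<^sub>\<infinity>i\<in>-F. norm (x i)) < \<epsilon>"
proof -
  obtain F where F: "finite F" "dist (\<Sum>i\<in>F. norm (x i)) (\<Sum>\<^sub>\<infinity>i. norm (x i)) \<le> \<epsilon>/2"
    using infsum_finite_approximation[OF l1_norm_summable_on[OF assms(1)], of "\<epsilon>/2"] assms(2)
    by auto
  have "(\<Sum>\<^sub>\<infinity>i. norm (x i)) - (\<Sum>i\<in>F. norm (x i)) \<le> \<epsilon>/2"
    using F(2) unfolding dist_real_def by arith
  then have "(\<Sum>\<^sub>\<infinity>i\<in>-F. norm (x i)) \<le> \<epsilon>/2"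
    using l1_infsum_split[OF assms(1), of F] F(1) by simp
  with F(1) assms(2) show ?thesis by (intro that[of F]) auto
qed

lemma l1norm_diff_finite_support:
  assumes "x \<in> l1" "finite F" "\<And>i. i \<notin> F \<Longrightarrow> d i = 0"
  shows "l1norm (\<lambda>i. x i - d i) = (\<Sum>i\<in>F. norm (x i - d i)) + (\<Sum>\<^sub>\<infinity>i\<in>-F. norm (x i))"
proof -
  have "d \<in> l1"
    by (rule l1_finite_support, rule finite_subset[OF _ assms(2)]) (use assms(3) in auto)
  then have "l1norm (\<lambda>i. x i - d i)
      = (\<Sum>\<^sub>\<infinity>i\<in>F. norm (x i - d i)) + (\<Sum>\<^sub>\<infinity>i\<in>-F. norm (x i - d i))"
    unfolding l1norm_def by (intro l1_infsum_split l1_diff assms(1))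
  also have "(\<Sum>\<^sub>\<infinity>i\<in>-F. norm (x i - d i)) = (\<Sum>\<^sub>\<infinity>i\<in>-F. norm (x i))"
    by (rule infsum_cong) (use assms(3) in auto)
  finally show ?thesis using assms(2) by simp
qed

lemma l1norm_triangle:
  assumes "x \<in> l1" "y \<in> l1" "z \<in> l1"
  shows "l1norm (\<lambda>i. x i - z i) \<le> l1norm (\<lambda>i. x i - y i) + l1norm (\<lambda>i. y i - z i)"
proof -
  have xy: "(\<lambda>i. norm (x i - y i)) summable_on UNIV" and yz: "(\<lambda>i. norm (y i - z i)) summable_on UNIV"
    by (intro l1_norm_summable_on l1_diff assms)+
  have "norm (x i - z i) \<le> norm (x i - y i) + norm (y i - z i)" for i
    using norm_triangle_ineq[of "x i - y i" "y i - z i"] by simp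
  then have "l1norm (\<lambda>i. x i - z i) \<le> (\<Sum>\<^sub>\<infinity>i. norm (x i - y i) + norm (y i - z i))"
    unfolding l1norm_def
    by (intro infsum_mono l1_norm_summable_on l1_diff assms summable_on_add xy yz)
  also have "\<dots> = l1norm (\<lambda>i. x i - y i) + l1norm (\<lambda>i. y i - z i)"
    unfolding l1norm_def by (rule infsum_add[OF xy yz])
  finally show ?thesis .
qed

lemma norm_infsum_le_l1norm: "x \<in> l1 \<Longrightarrow> norm (\<Sum>\<^sub>\<infinity>t\<in>S. x t) \<le> l1norm x"
proof -
  assume x: "x \<in> l1"
  have "norm (\<Sum>\<^sub>\<infinity>t\<in>S. x t) \<le> (\<Sum>\<^sub>\<infinity>t\<in>S. norm (x t))"
    by (rule norm_infsum_bound) (rule l1_norm_summable_on[OF x])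
  also have "\<dots> \<le> l1norm x"
    unfolding l1norm_def by (rule infsum_mono_neutral) (auto intro: l1_norm_summable_on[OF x])
  finally show ?thesis .
qed

lemma infsum_delta: "(\<Sum>\<^sub>\<infinity>n. if n = m then c else 0) = c"
proof -
  have "(\<Sum>\<^sub>\<infinity>n. if n = m then c else 0) = (\<Sum>\<^sub>\<infinity>n\<in>{m}. if n = m then c else 0)"
    by (intro infsum_cong_neutral) auto
  then show ?thesis by simp
qed

definition unit_vector :: "real \<Rightarrow> real \<Rightarrow> complex" where
  "unit_vector a = (\<lambda>t. if t = a then 1 else 0)"

lemma unit_vector_l1: "unit_vector a \<in> l1"
  by (rule l1_finite_support) (auto simp: unit_vector_def)

lemma infsum_unit_vector: "(\<Sum>\<^sub>\<infinity>t\<in>S. unit_vector a t) = (if a \<in> S then 1 else 0)"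
proof (cases "a \<in> S")
  case True
  then have "(\<Sum>\<^sub>\<infinity>t\<in>S. unit_vector a t) = (\<Sum>\<^sub>\<infinity>t\<in>{a}. unit_vector a t)"
    by (intro infsum_cong_neutral) (auto simp: unit_vector_def)
  with True show ?thesis by (simp add: unit_vector_def)
next
  case False
  then have "(\<Sum>\<^sub>\<infinity>t\<in>S. unit_vector a t) = 0"
    by (intro infsum_0) (auto simp: unit_vector_def)
  with False show ?thesis by simp
qed

lemma l1norm_unit_vector_diff:
  assumes "a \<noteq> b"
  shows "l1norm (\<lambda>i. unit_vector a i - unit_vector b i) = 2"
proof -
  have "l1norm (\<lambda>i. unit_vector a i - unit_vector b i)
      = (\<Sum>\<^sub>\<infinity>i\<in>{a, b}. norm (unit_vector a i - unit_vector b i))"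
    unfolding l1norm_def by (intro infsum_cong_neutral) (auto simp: unit_vector_def)
  also have "\<dots> = 2" using assms by (simp add: unit_vector_def)
  finally show ?thesis .
qed

text \<open>Unit vectors are at mutual distance 2, so distinct ones have distinct points of D within distance 1.\<close>
lemma l1_dense_in_lepoll:
  assumes "l1_dense_in D V" "V \<subseteq> l1" "unit_vector ` A \<subseteq> V"
  shows "A \<lesssim> D"
proof -
  have "\<exists>d\<in>D. l1norm (\<lambda>i. x i - d i) < 1" if "x \<in> V" for x
    using assms(1) that zero_less_one unfolding l1_dense_in_def by blast
  then have "\<forall>a\<in>A. \<exists>d. d \<in> D \<and> l1norm (\<lambda>i. unit_vector a i - d i) < 1"
    using assms(3) by blast
  then obtain g where g: "\<forall>a\<in>A. g a \<in> D \<and> l1norm (\<lambda>i. unit_vector a i - g a i) < 1"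
    by (rule exE[OF bchoice])
  have gl: "g a \<in> l1" if "a \<in> A" for a
    using g that assms(1,2) by (auto simp: l1_dense_in_def)
  have "inj_on g A"
  proof (rule inj_onI, rule ccontr)
    fix a b assume ab: "a \<in> A" "b \<in> A" "g a = g b" "a \<noteq> b"
    have "l1norm (\<lambda>i. unit_vector a i - unit_vector b i)
        \<le> l1norm (\<lambda>i. unit_vector a i - g a i) + l1norm (\<lambda>i. g b i - unit_vector b i)"
      using l1norm_triangle[OF unit_vector_l1 gl[OF ab(1)] unit_vector_l1] ab(3) by simp
    also have "l1norm (\<lambda>i. g b i - unit_vector b i) = l1norm (\<lambda>i. unit_vector b i - g b i)"
      unfolding l1norm_def by (simp add: norm_minus_commute)
    moreover have "l1norm (\<lambda>i. unit_vector a i - g a i) < 1" "l1norm (\<lambda>i. unit_vector b i - g b i) < 1"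
      using g ab(1,2) by blast+
    ultimately show False
      using l1norm_unit_vector_diff[OF ab(4)] by linarith
  qed
  with g show ?thesis
    unfolding lepoll_def by (intro exI[of _ g]) auto
qed

section \<open>The quadratic form\<close>

lemma zero_subspace_polar:
  assumes "bounded_bilinear_l1 B" "\<And>x. x \<in> l1 \<Longrightarrow> P x = B x x"
    and "zero_subspace P U" "y \<in> U" "z \<in> U"
  shows "B y z + B z y = 0"
proof -
  have l1: "y \<in> l1" "z \<in> l1" and yz: "(\<lambda>i. y i + z i) \<in> U"
    using assms(3-5) unfolding zero_subspace_def l1_subspace_def by auto
  have add_left: "B (\<lambda>i. a i + b i) c = B a c + B b c"
    and add_right: "B c (\<lambda>i. a i + b i) = B c a + B c b"
    if "a \<in> l1" "b \<in> l1" "c \<in> l1" for a b c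
    using assms(1) that unfolding bounded_bilinear_l1_def by blast+
  have "B y y + B y z + (B z y + B z z) = B (\<lambda>i. y i + z i) (\<lambda>i. y i + z i)"
    using l1 by (simp add: add_left add_right l1_add)
  also have "\<dots> = 0"
    using assms(2-3) yz l1_add[OF l1] unfolding zero_subspace_def by auto
  moreover have "B y y = 0" "B z z = 0"
    using assms(2-5) l1 unfolding zero_subspace_def by auto
  ultimately show ?thesis by simp
qed

definition partner :: "nat \<Rightarrow> real" where
  "partner m = - real m - 1"

lemma inj_partner: "inj partner"
  by (rule injI) (simp add: partner_def)

lemma partner_neq_nat [simp]: "partner m \<noteq> real n" "real n \<noteq> partner m"
  unfolding partner_def by (smt (verit) of_nat_0_le_iff)+

definition rest :: "real set" where
  "rest = - (range real \<union> range partner)"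

definition rat_interval :: "nat \<Rightarrow> real set" where
  "rat_interval k = {of_rat (fst (from_nat k :: rat \<times> rat))<..<of_rat (snd (from_nat k :: rat \<times> rat))}"

lemma rat_interval_to_nat: "rat_interval (to_nat (a, b)) = {of_rat a<..<of_rat b}"
  by (simp add: rat_interval_def)

text \<open>The rational interval I_k enters all the infinitely many blocks n with fst (prod_decode n) = k.\<close>
definition block :: "nat \<Rightarrow> real set" where
  "block n = insert (partner n) (rest \<inter> rat_interval (fst (prod_decode n)))"

lemma nat_notin_block [simp]: "real m \<notin> block n"
  by (auto simp: block_def rest_def)

lemma partner_in_block_iff [simp]: "partner m \<in> block n \<longleftrightarrow> m = n"
  using inj_partner by (auto simp: block_def rest_def inj_eq)

lemma block_sum_eq:
  assumes "y \<in> l1"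
  shows "(\<Sum>\<^sub>\<infinity>t\<in>block n. y t) = y (partner n) + (\<Sum>\<^sub>\<infinity>t\<in>rest \<inter> rat_interval (fst (prod_decode n)). y t)"
  unfolding block_def
  by (rule infsum_insert) (auto simp: rest_def intro: l1_summable_on[OF assms])

definition bform :: "(real \<Rightarrow> complex) \<Rightarrow> (real \<Rightarrow> complex) \<Rightarrow> complex" where
  "bform x y = (\<Sum>\<^sub>\<infinity>n. y (real n) * (\<Sum>\<^sub>\<infinity>t\<in>block n. x t))"

definition pform :: "(real \<Rightarrow> complex) \<Rightarrow> complex" where
  "pform x = bform x x"

lemma bform_abs_summable:
  assumes "x \<in> l1" "y \<in> l1"
  shows "(\<lambda>n. norm (y (real n) * (\<Sum>\<^sub>\<infinity>t\<in>block n. x t))) summable_on UNIV"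
  by (rule summable_on_comparison_test[where f="\<lambda>n. norm (y (real n)) * l1norm x"])
     (auto simp: norm_mult intro!: summable_on_cmult_left l1_reindex(1) assms inj_of_nat
        mult_left_mono norm_infsum_le_l1norm)

lemma bform_summable: "x \<in> l1 \<Longrightarrow> y \<in> l1 \<Longrightarrow> (\<lambda>n. y (real n) * (\<Sum>\<^sub>\<infinity>t\<in>block n. x t)) summable_on UNIV"
  by (rule abs_summable_summable[OF bform_abs_summable])

lemma norm_bform_le:
  assumes "x \<in> l1" "y \<in> l1"
  shows "norm (bform x y) \<le> l1norm x * l1norm y"
proof -
  have "norm (bform x y) \<le> (\<Sum>\<^sub>\<infinity>n. norm (y (real n) * (\<Sum>\<^sub>\<infinity>t\<in>block n. x t)))"
    unfolding bform_def by (rule norm_infsum_bound[OF bform_abs_summable[OF assms]])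
  also have "\<dots> \<le> (\<Sum>\<^sub>\<infinity>n. norm (y (real n)) * l1norm x)"
    by (rule infsum_mono[OF bform_abs_summable[OF assms]])
       (auto simp: norm_mult intro!: summable_on_cmult_left l1_reindex(1) assms inj_of_nat
          mult_left_mono norm_infsum_le_l1norm)
  also have "\<dots> = (\<Sum>\<^sub>\<infinity>n. norm (y (real n))) * l1norm x"
    by (rule infsum_cmult_left) (intro l1_reindex(1) assms inj_of_nat)
  also have "\<dots> \<le> l1norm y * l1norm x"
    by (intro mult_right_mono l1_reindex(2) assms inj_of_nat) (simp add: l1norm_def infsum_nonneg)
  finally show ?thesis by (simp add: mult.commute)
qed

lemma bform_add_left:
  assumes "x \<in> l1" "x' \<in> l1" "y \<in> l1"
  shows "bform (\<lambda>i. x i + x' i) y = bform x y + bform x' y"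
proof -
  have "(\<Sum>\<^sub>\<infinity>t\<in>block n. x t + x' t) = (\<Sum>\<^sub>\<infinity>t\<in>block n. x t) + (\<Sum>\<^sub>\<infinity>t\<in>block n. x' t)" for n
    by (intro infsum_add l1_summable_on assms)
  then have "bform (\<lambda>i. x i + x' i) y
      = (\<Sum>\<^sub>\<infinity>n. y (real n) * (\<Sum>\<^sub>\<infinity>t\<in>block n. x t) + y (real n) * (\<Sum>\<^sub>\<infinity>t\<in>block n. x' t))"
    unfolding bform_def by (simp only: distrib_left)
  also have "\<dots> = bform x y + bform x' y"
    unfolding bform_def by (intro infsum_add bform_summable assms)
  finally show ?thesis .
qed

lemma bform_add_right:
  assumes "x \<in> l1" "y \<in> l1" "y' \<in> l1"
  shows "bform x (\<lambda>i. y i + y' i) = bform x y + bform x y'"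
  unfolding bform_def distrib_right by (intro infsum_add bform_summable assms)

lemma bform_cmult_left:
  assumes "x \<in> l1" "y \<in> l1"
  shows "bform (\<lambda>i. c * x i) y = c * bform x y"
proof -
  have "(\<Sum>\<^sub>\<infinity>t\<in>block n. c * x t) = c * (\<Sum>\<^sub>\<infinity>t\<in>block n. x t)" for n
    by (intro infsum_cmult_right l1_summable_on assms)
  then have "bform (\<lambda>i. c * x i) y = (\<Sum>\<^sub>\<infinity>n. c * (y (real n) * (\<Sum>\<^sub>\<infinity>t\<in>block n. x t)))"
    unfolding bform_def by (simp only: mult.left_commute)
  also have "\<dots> = c * bform x y"
    unfolding bform_def by (intro infsum_cmult_right bform_summable assms)
  finally show ?thesis .
qed

lemma bform_cmult_right:
  assumes "x \<in> l1" "y \<in> l1"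
  shows "bform x (\<lambda>i. c * y i) = c * bform x y"
  unfolding bform_def mult.assoc by (intro infsum_cmult_right bform_summable assms)

lemma bounded_bilinear_l1_bform: "bounded_bilinear_l1 bform"
proof -
  have "\<exists>C. \<forall>x\<in>l1. \<forall>y\<in>l1. norm (bform x y) \<le> C * l1norm x * l1norm y"
    by (rule exI[of _ 1]) (simp add: norm_bform_le)
  then show ?thesis
    unfolding bounded_bilinear_l1_def
    using bform_add_left bform_add_right bform_cmult_left bform_cmult_right by blast
qed

lemma cont_quadratic_poly_l1_pform: "cont_quadratic_poly_l1 pform"
  unfolding cont_quadratic_poly_l1_def pform_def using bounded_bilinear_l1_bform by blast

lemma bform_eq_0_if_nat_vanishing: "(\<And>n. y (real n) = 0) \<Longrightarrow> bform x y = 0"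
  by (simp add: bform_def)

lemma bform_eq_0_if_nat_supported:
  assumes "\<And>t. t \<notin> range real \<Longrightarrow> x t = 0"
  shows "bform x y = 0"
proof -
  have "(\<Sum>\<^sub>\<infinity>t\<in>block n. x t) = 0" for n
    by (rule infsum_0) (metis assms imageE nat_notin_block)
  then show ?thesis by (simp add: bform_def)
qed

lemma bform_unit_vector_partner_left: "bform (unit_vector (partner m)) y = y (real m)"
proof -
  have "(\<lambda>n. y (real n) * (\<Sum>\<^sub>\<infinity>t\<in>block n. unit_vector (partner m) t))
      = (\<lambda>n. if n = m then y (real m) else 0)"
    by (auto simp: infsum_unit_vector)
  then show ?thesis by (simp add: bform_def infsum_delta)
qed

lemma bform_unit_vector_nat_right: "bform x (unit_vector (real m)) = (\<Sum>\<^sub>\<infinity>t\<in>block m. x t)"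
proof -
  have "(\<lambda>n. unit_vector (real m) (real n) * (\<Sum>\<^sub>\<infinity>t\<in>block n. x t))
      = (\<lambda>n. if n = m then (\<Sum>\<^sub>\<infinity>t\<in>block m. x t) else 0)"
    by (auto simp: unit_vector_def)
  then show ?thesis by (simp add: bform_def infsum_delta)
qed

section \<open>Maximal zero subspaces\<close>

text \<open>A short rational interval around t0 avoids the finitely many points carrying all but less than
  |y t0| of the norm of y; so the sum of y over its intersection with R differs from y t0 by less
  than |y t0|.\<close>
lemma l1_eq_0_if_rat_interval_sums_eq_0:
  assumes y: "y \<in> l1" and "t0 \<in> R"
    and sums: "\<And>a b::rat. (\<Sum>\<^sub>\<infinity>t\<in>R \<inter> {of_rat a<..<of_rat b}. y t) = 0"
  shows "y t0 = 0"
proof (rule ccontr)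
  assume "y t0 \<noteq> 0"
  then obtain F where F: "finite F" "(\<Sum>\<^sub>\<infinity>t\<in>-F. norm (y t)) < norm (y t0)"
    using l1_tail_small[OF y, of "norm (y t0)"] by auto
  have "open (- (F - {t0}))"
    by (rule open_Compl, rule finite_imp_closed) (use F(1) in simp)
  moreover have "t0 \<in> - (F - {t0})" by simp
  ultimately obtain \<delta> where "\<delta> > 0" and \<delta>: "ball t0 \<delta> \<subseteq> - (F - {t0})"
    by (meson open_contains_ball)
  obtain a :: rat where a: "t0 - \<delta> < of_rat a" "of_rat a < t0"
    using Rats_dense_in_real[of "t0 - \<delta>" t0] \<open>\<delta> > 0\<close> by (auto elim: Rats_cases)
  obtain b :: rat where b: "t0 < of_rat b" "of_rat b < t0 + \<delta>"
    using Rats_dense_in_real[of t0 "t0 + \<delta>"] \<open>\<delta> > 0\<close> by (auto elim: Rats_cases)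
  define S where "S = R \<inter> {of_rat a<..<of_rat b}"
  have "t0 \<in> S" using a b \<open>t0 \<in> R\<close> by (simp add: S_def)
  have S_tail: "S - {t0} \<subseteq> -F"
  proof
    fix t assume t: "t \<in> S - {t0}"
    then have "t \<in> ball t0 \<delta>" using a b by (auto simp: S_def dist_real_def)
    with t \<delta> show "t \<in> -F" by auto
  qed
  have "y t0 + (\<Sum>\<^sub>\<infinity>t\<in>S - {t0}. y t) = (\<Sum>\<^sub>\<infinity>t\<in>insert t0 (S - {t0}). y t)"
    by (rule infsum_insert[symmetric]) (auto intro: l1_summable_on[OF y])
  also have "\<dots> = 0"
    using sums[of a b] \<open>t0 \<in> S\<close> by (simp add: S_def insert_absorb)
  finally have "y t0 = - (\<Sum>\<^sub>\<infinity>t\<in>S - {t0}. y t)"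
    by (simp add: eq_neg_iff_add_eq_0)
  then have "norm (y t0) = norm (\<Sum>\<^sub>\<infinity>t\<in>S - {t0}. y t)"
    by simp
  also have "\<dots> \<le> (\<Sum>\<^sub>\<infinity>t\<in>S - {t0}. norm (y t))"
    by (rule norm_infsum_bound) (rule l1_norm_summable_on[OF y])
  also have "\<dots> \<le> (\<Sum>\<^sub>\<infinity>t\<in>-F. norm (y t))"
    by (rule infsum_mono_neutral) (use S_tail in \<open>auto intro: l1_norm_summable_on[OF y]\<close>)
  finally show False using F(2) by simp
qed

text \<open>The partners of the blocks meeting a fixed rational interval form a null sequence, and they all
  equal minus the sum of y over that interval.\<close>
lemma block_sums_eq_0_imp_nat_supported:
  assumes y: "y \<in> l1" and blocks: "\<And>n. (\<Sum>\<^sub>\<infinity>t\<in>block n. y t) = 0" and "t \<notin> range real"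
  shows "y t = 0"
proof -
  define s where "s k = (\<Sum>\<^sub>\<infinity>t\<in>rest \<inter> rat_interval k. y t)" for k
  have partner_eq: "y (partner n) = - s (fst (prod_decode n))" for n
    using block_sum_eq[OF y, of n] blocks[of n] by (simp add: s_def eq_neg_iff_add_eq_0)
  have s_0: "s k = 0" for k
  proof -
    have "inj (\<lambda>j. partner (prod_encode (k, j)))"
      by (intro injI) (simp add: inj_eq[OF inj_partner])
    then have "(\<lambda>j. y (partner (prod_encode (k, j)))) \<longlonglongrightarrow> 0"
      by (rule l1_reindex_tendsto_zero[OF y])
    then show ?thesis by (simp add: partner_eq LIMSEQ_const_iff)
  qed
  show ?thesis
  proof (cases "t \<in> range partner")
    case True
    then show ?thesis using partner_eq s_0 by auto
  next
    case False
    with assms(3) have "t \<in> rest" by (simp add: rest_def)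
    then show ?thesis
    proof (rule l1_eq_0_if_rat_interval_sums_eq_0[OF y])
      fix a b :: rat
      show "(\<Sum>\<^sub>\<infinity>t\<in>rest \<inter> {of_rat a<..<of_rat b}. y t) = 0"
        using s_0[of "to_nat (a, b)"] by (simp add: s_def rat_interval_to_nat)
    qed
  qed
qed

definition nat_supported :: "(real \<Rightarrow> complex) set" where
  "nat_supported = {x \<in> l1. \<forall>t. t \<notin> range real \<longrightarrow> x t = 0}"

definition nat_vanishing :: "(real \<Rightarrow> complex) set" where
  "nat_vanishing = {x \<in> l1. \<forall>n. x (real n) = 0}"

lemma zero_subspace_nat_supported: "zero_subspace pform nat_supported"
proof -
  have "l1_subspace nat_supported"
    unfolding l1_subspace_def nat_supported_def by (auto intro: l1_add l1_cmult l1_zero)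
  moreover have "pform x = 0" if "x \<in> nat_supported" for x
    using that unfolding pform_def nat_supported_def by (auto intro: bform_eq_0_if_nat_supported)
  ultimately show ?thesis by (simp add: zero_subspace_def)
qed

lemma zero_subspace_nat_vanishing: "zero_subspace pform nat_vanishing"
proof -
  have "l1_subspace nat_vanishing"
    unfolding l1_subspace_def nat_vanishing_def by (auto intro: l1_add l1_cmult l1_zero)
  moreover have "pform x = 0" if "x \<in> nat_vanishing" for x
    using that unfolding pform_def nat_vanishing_def by (auto intro: bform_eq_0_if_nat_vanishing)
  ultimately show ?thesis by (simp add: zero_subspace_def)
qed

lemma maximal_zero_subspace_nat_supported: "maximal_zero_subspace pform nat_supported"
  unfolding maximal_zero_subspace_def
proof (intro conjI zero_subspace_nat_supported allI impI)
  fix U assume U: "zero_subspace pform U \<and> nat_supported \<subseteq> U"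
  have "y \<in> nat_supported" if "y \<in> U" for y
  proof -
    have y: "y \<in> l1" using U that by (auto simp: zero_subspace_def l1_subspace_def)
    have "(\<Sum>\<^sub>\<infinity>t\<in>block m. y t) = 0" for m
    proof -
      have "unit_vector (real m) \<in> nat_supported"
        using unit_vector_l1 by (auto simp: nat_supported_def unit_vector_def)
      then have "unit_vector (real m) \<in> U" using U by auto
      then have "bform y (unit_vector (real m)) + bform (unit_vector (real m)) y = 0"
        using U that
        by (intro zero_subspace_polar[OF bounded_bilinear_l1_bform, of pform]) (auto simp: pform_def)
      moreover have "bform (unit_vector (real m)) y = 0"
        by (rule bform_eq_0_if_nat_supported) (auto simp: unit_vector_def)
      ultimately show ?thesis by (simp add: bform_unit_vector_nat_right)
    qed
    then show ?thesis
      using block_sums_eq_0_imp_nat_supported[OF y] y by (simp add: nat_supported_def)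
  qed
  with U show "U = nat_supported" by auto
qed

lemma maximal_zero_subspace_nat_vanishing: "maximal_zero_subspace pform nat_vanishing"
  unfolding maximal_zero_subspace_def
proof (intro conjI zero_subspace_nat_vanishing allI impI)
  fix U assume U: "zero_subspace pform U \<and> nat_vanishing \<subseteq> U"
  have "y \<in> nat_vanishing" if "y \<in> U" for y
  proof -
    have y: "y \<in> l1" using U that by (auto simp: zero_subspace_def l1_subspace_def)
    have "y (real m) = 0" for m
    proof -
      have "unit_vector (partner m) \<in> nat_vanishing"
        using unit_vector_l1 by (auto simp: nat_vanishing_def unit_vector_def)
      then have "unit_vector (partner m) \<in> U" using U by auto
      then have "bform y (unit_vector (partner m)) + bform (unit_vector (partner m)) y = 0"
        using U that
        by (intro zero_subspace_polar[OF bounded_bilinear_l1_bform, of pform]) (auto simp: pform_def)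
      moreover have "bform y (unit_vector (partner m)) = 0"
        by (rule bform_eq_0_if_nat_vanishing) (simp add: unit_vector_def)
      ultimately show ?thesis by (simp add: bform_unit_vector_partner_left)
    qed
    then show ?thesis using y by (simp add: nat_vanishing_def)
  qed
  with U show "U = nat_vanishing" by auto
qed

section \<open>Separability and density\<close>

definition list_vector :: "(real \<times> complex) list \<Rightarrow> real \<Rightarrow> complex" where
  "list_vector l t = (case map_of l t of None \<Rightarrow> 0 | Some z \<Rightarrow> z)"

lemma list_vector_graph:
  "finite S \<Longrightarrow> list_vector (map (\<lambda>t. (t, f t)) (sorted_list_of_set S)) = (\<lambda>t. if t \<in> S then f t else 0)"
  by (auto simp: list_vector_def map_of_map_restrict restrict_map_def)

lemma list_vector_l1: "list_vector l \<in> l1"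
  by (rule l1_finite_support, rule finite_subset[of _ "dom (map_of l)"])
     (auto simp: list_vector_def finite_dom_map_of split: option.splits)

lemma list_vector_eq_0: "set l \<subseteq> A \<times> UNIV \<Longrightarrow> t \<notin> A \<Longrightarrow> list_vector l t = 0"
  by (auto simp: list_vector_def split: option.splits dest!: map_of_SomeD)

definition rat_complex :: "complex set" where
  "rat_complex = (\<lambda>(a, b). Complex a b) ` (\<rat> \<times> \<rat>)"

lemma countable_rat_complex: "countable rat_complex"
  unfolding rat_complex_def by (intro countable_image countable_SIGMA countable_rat)

lemma rat_complex_approx:
  assumes "\<delta> > 0"
  shows "\<exists>q\<in>rat_complex. norm (z - q) < \<delta>"
proof -
  obtain a where a: "a \<in> \<rat>" "Re z - \<delta>/2 < a" "a < Re z"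
    using Rats_dense_in_real[of "Re z - \<delta>/2" "Re z"] assms by auto
  obtain b where b: "b \<in> \<rat>" "Im z - \<delta>/2 < b" "b < Im z"
    using Rats_dense_in_real[of "Im z - \<delta>/2" "Im z"] assms by auto
  have "norm (z - Complex a b) \<le> \<bar>Re z - a\<bar> + \<bar>Im z - b\<bar>"
    using cmod_le[of "z - Complex a b"] by simp
  also have "\<dots> < \<delta>" using a b by arith
  finally have "norm (z - Complex a b) < \<delta>" .
  moreover have "Complex a b \<in> rat_complex"
    using a(1) b(1) unfolding rat_complex_def by (intro image_eqI[of _ _ "(a, b)"]) simp_all
  ultimately show ?thesis by blast
qed

lemma l1_dense_in_nat_supported:
  "l1_dense_in (list_vector ` lists (range real \<times> rat_complex)) nat_supported"
  unfolding l1_dense_in_def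
proof (intro conjI ballI allI impI)
  let ?D = "list_vector ` lists (range real \<times> rat_complex)"
  show "?D \<subseteq> nat_supported"
    by (auto simp: nat_supported_def list_vector_l1 intro!: list_vector_eq_0[where A="range real"])
  fix x and \<epsilon> :: real assume x: "x \<in> nat_supported" and "\<epsilon> > 0"
  then have xl: "x \<in> l1" by (simp add: nat_supported_def)
  obtain F where F: "finite F" "(\<Sum>\<^sub>\<infinity>i\<in>-F. norm (x i)) < \<epsilon>/2"
    using l1_tail_small[OF xl, of "\<epsilon>/2"] \<open>\<epsilon> > 0\<close> by auto
  define \<delta> where "\<delta> = \<epsilon> / (2 * (real (card F) + 1))"
  have "\<delta> > 0" using \<open>\<epsilon> > 0\<close> by (simp add: \<delta>_def)
  then have "\<forall>t. \<exists>q. q \<in> rat_complex \<and> norm (x t - q) < \<delta>"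
    using rat_complex_approx by blast
  then obtain q where q: "\<forall>t. q t \<in> rat_complex \<and> norm (x t - q t) < \<delta>"
    by (rule exE[OF choice])
  define S where "S = F \<inter> range real"
  define d where "d = (\<lambda>t. if t \<in> S then q t else 0)"
  have "d = list_vector (map (\<lambda>t. (t, q t)) (sorted_list_of_set S))"
    using F(1) by (simp add: d_def S_def list_vector_graph)
  moreover have "map (\<lambda>t. (t, q t)) (sorted_list_of_set S) \<in> lists (range real \<times> rat_complex)"
    using F(1) q by (auto simp: S_def)
  ultimately have "d \<in> ?D" by blast
  have "norm (x t - d t) \<le> \<delta>" if "t \<in> F" for t
    using x q that \<open>\<delta> > 0\<close> by (auto simp: d_def S_def nat_supported_def less_imp_le)
  then have "(\<Sum>t\<in>F. norm (x t - d t)) \<le> real (card F) * \<delta>"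
    using sum_mono[of F "\<lambda>t. norm (x t - d t)" "\<lambda>_. \<delta>"] by simp
  also have "\<dots> \<le> (real (card F) + 1) * \<delta>"
    using \<open>\<delta> > 0\<close> by simp
  also have "\<dots> = \<epsilon>/2"
    using of_nat_0_le_iff[of "card F"] unfolding \<delta>_def by (simp add: field_simps)
  finally have "(\<Sum>t\<in>F. norm (x t - d t)) \<le> \<epsilon>/2" .
  moreover have "l1norm (\<lambda>i. x i - d i) = (\<Sum>t\<in>F. norm (x t - d t)) + (\<Sum>\<^sub>\<infinity>i\<in>-F. norm (x i))"
    by (rule l1norm_diff_finite_support[OF xl F(1)]) (simp add: d_def S_def)
  ultimately have "l1norm (\<lambda>i. x i - d i) < \<epsilon>"
    using F(2) by linarith
  with \<open>d \<in> ?D\<close> show "\<exists>d\<in>?D. l1norm (\<lambda>i. x i - d i) < \<epsilon>" by blast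
qed

lemma l1_separable_nat_supported: "l1_separable nat_supported"
proof -
  have "countable (list_vector ` lists (range real \<times> rat_complex))"
    by (intro countable_image countable_lists countable_SIGMA countable_rat_complex) simp
  then show ?thesis
    unfolding l1_separable_def using l1_dense_in_nat_supported by blast
qed

lemma l1_dense_in_nat_vanishing: "l1_dense_in (list_vector ` lists ((- range real) \<times> UNIV)) nat_vanishing"
  unfolding l1_dense_in_def
proof (intro conjI ballI allI impI)
  let ?D = "list_vector ` lists ((- range real) \<times> UNIV)"
  show "?D \<subseteq> nat_vanishing"
    by (auto simp: nat_vanishing_def list_vector_l1 intro!: list_vector_eq_0[where A="- range real"])
  fix x and \<epsilon> :: real assume x: "x \<in> nat_vanishing" and "\<epsilon> > 0"
  then have xl: "x \<in> l1" by (simp add: nat_vanishing_def)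
  obtain F where F: "finite F" "(\<Sum>\<^sub>\<infinity>i\<in>-F. norm (x i)) < \<epsilon>"
    using l1_tail_small[OF xl \<open>\<epsilon> > 0\<close>] by blast
  define S where "S = F - range real"
  define d where "d = (\<lambda>t. if t \<in> S then x t else 0)"
  have "d = list_vector (map (\<lambda>t. (t, x t)) (sorted_list_of_set S))"
    using F(1) by (simp add: d_def S_def list_vector_graph)
  moreover have "map (\<lambda>t. (t, x t)) (sorted_list_of_set S) \<in> lists ((- range real) \<times> UNIV)"
    using F(1) by (auto simp: S_def)
  ultimately have "d \<in> ?D" by blast
  have "x t = d t" if "t \<in> F" for t
    using x that by (auto simp: d_def S_def nat_vanishing_def)
  then have "l1norm (\<lambda>i. x i - d i) = (\<Sum>\<^sub>\<infinity>i\<in>-F. norm (x i))"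
    using l1norm_diff_finite_support[OF xl F(1), of d] by (simp add: d_def S_def)
  with F(2) have "l1norm (\<lambda>i. x i - d i) < \<epsilon>" by simp
  with \<open>d \<in> ?D\<close> show "\<exists>d\<in>?D. l1norm (\<lambda>i. x i - d i) < \<epsilon>" by blast
qed

lemma l1_dense_in_nat_vanishing_lepoll:
  assumes "l1_dense_in D nat_vanishing"
  shows "(UNIV :: real set) \<lesssim> D"
proof -
  have "real n \<noteq> - exp t" for n and t :: real
    by (smt (verit) exp_gt_zero of_nat_0_le_iff)
  then have units: "unit_vector ` range (\<lambda>t::real. - exp t) \<subseteq> nat_vanishing"
    using unit_vector_l1 by (auto simp: nat_vanishing_def unit_vector_def)
  have "range (\<lambda>t::real. - exp t) \<lesssim> D"
    by (rule l1_dense_in_lepoll[OF assms _ units]) (auto simp: nat_vanishing_def)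
  moreover have "inj (\<lambda>t::real. - exp t)"
    by (simp add: inj_def)
  ultimately show ?thesis by simp
qed

lemma l1_density_continuum_nat_vanishing: "l1_density_continuum nat_vanishing"
proof -
  let ?D = "list_vector ` lists ((- range real) \<times> UNIV)"
  have "?D \<lesssim> lists ((- range real) \<times> (UNIV :: complex set))"
    by (rule image_lepoll)
  also have "\<dots> \<lesssim> (UNIV :: (real \<times> complex) list set)"
    by (rule subset_imp_lepoll) simp
  also have "\<dots> \<lesssim> (UNIV :: (real \<times> complex) set)"
    by (rule lists_UNIV_lepoll_infinite) (simp add: finite_prod infinite_UNIV_char_0)
  also have "\<dots> \<approx> (UNIV :: real set)"
    by (rule real_complex_eqpoll_real)
  finally have "?D \<approx> (UNIV :: real set)"
    by (intro lepoll_antisym l1_dense_in_nat_vanishing_lepoll l1_dense_in_nat_vanishing)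
  then show ?thesis
    unfolding l1_density_continuum_def
    using l1_dense_in_nat_vanishing l1_dense_in_nat_vanishing_lepoll by blast
qed

theorem mainTheorem3:
  shows "\<exists>P. cont_quadratic_poly_l1 P \<and>
     (\<exists>V. maximal_zero_subspace P V \<and> l1_separable V) \<and>
     (\<exists>W. maximal_zero_subspace P W \<and> l1_density_continuum W)"
  using cont_quadratic_poly_l1_pform
    maximal_zero_subspace_nat_supported l1_separable_nat_supported
    maximal_zero_subspace_nat_vanishing l1_density_continuum_nat_vanishing
  by blast

end
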